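(* Let $N\ge 2$ and, for $\varepsilon\in(0,1)$, let $$\Omega_\varepsilon:=\Big\{(x_1,\dots,x_{N+1})\in\mathbb{R}^{N+1}\,:\,\sum_{i=1}^{N+1}x_i^2=1,\ \cos((1-\varepsilon)\pi)<x_{N+1}\le 1\Big\}\subset\mathbb{S}^N$$ be the spherical cap (geodesic ball of radius $(1-\varepsilon)\pi$ centred at the North Pole). Let $w_{\Omega_\varepsilon}$ be the torsion function of $\Omega_\varepsilon$, i.e. the unique solution of $-\Delta_{\mathbb{S}^N} w=1$ in $\Omega_\varepsilon$, $w=0$ on $\partial\Omega_\varepsilon$, and let $\lambda_1(\Omega_\varepsilon)>0$ be the principal Dirichlet eigenvalue of $-\Delta_{\mathbb{S}^N}$ in $\Omega_\varepsilon$. Then, as $\varepsilon\to0$, $$\|w_{\Omega_\varepsilon}\|_\infty=\frac{1}{\lambda_1(\Omega_\varepsilon)}+O(1).$$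
   Context: $\Delta_{\mathbb{S}^N}$ denotes the Laplace–Beltrami operator on the unit sphere $\mathbb{S}^N\subset\mathbb{R}^{N+1}$. $O(1)$ denotes a quantity bounded in absolute value by a constant independent of $\varepsilon$ for all sufficiently small $\varepsilon>0$. *)

theory Defs
  imports "HOL-Analysis.Analysis"
begin

text \<open>Ambient space R^(N+1) is real^'n with CARD('n) = N+1; the "north pole"
coordinate x_(N+1) is the coordinate x$k for a fixed index k.\<close>

definition C2_on :: "('a::euclidean_space) set \<Rightarrow> ('a \<Rightarrow> real) \<Rightarrow> bool" where
  "C2_on U g \<longleftrightarrow> (\<exists>(g' :: 'a \<Rightarrow> ('a \<Rightarrow>\<^sub>L real)) (g'' :: 'a \<Rightarrow> ('a \<Rightarrow>\<^sub>L ('a \<Rightarrow>\<^sub>L real))).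
      continuous_on U g'' \<and>
      (\<forall>x\<in>U. (g has_derivative blinfun_apply (g' x)) (at x) \<and>
              (g' has_derivative blinfun_apply (g'' x)) (at x)))"

definition eucl_laplacian :: "(real^'n \<Rightarrow> real) \<Rightarrow> real^'n \<Rightarrow> real" where
  "eucl_laplacian g x = (\<Sum>i\<in>UNIV. deriv (deriv (\<lambda>t. g (x + t *\<^sub>R axis i 1))) 0)"

definition hom0_ext :: "(real^'n \<Rightarrow> real) \<Rightarrow> real^'n \<Rightarrow> real" where
  "hom0_ext f y = f (y /\<^sub>R norm y)"

text \<open>Laplace-Beltrami operator on the unit sphere: the Euclidean Laplacian of the
zero-homogeneous extension, evaluated at points of the sphere.\<close>
definition sphere_laplacian :: "(real^'n \<Rightarrow> real) \<Rightarrow> real^'n \<Rightarrow> real" where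
  "sphere_laplacian f x = eucl_laplacian (hom0_ext f) x"

text \<open>Open cone over a subset of the sphere (open in R^(N+1) iff the subset is relatively open).\<close>
definition cone_over :: "(real^'n) set \<Rightarrow> (real^'n) set" where
  "cone_over \<Omega> = {y. y \<noteq> 0 \<and> y /\<^sub>R norm y \<in> \<Omega>}"

text \<open>We normalise u to vanish outside \<Omega> (so solutions are unique as functions).\<close>
definition dirichlet_sol :: "(real^'n) set \<Rightarrow> (real \<Rightarrow> real) \<Rightarrow> (real^'n \<Rightarrow> real) \<Rightarrow> bool" where
  "dirichlet_sol \<Omega> F u \<longleftrightarrow>
     C2_on (cone_over \<Omega>) (hom0_ext u) \<and>
     continuous_on (closure \<Omega>) u \<and>
     (\<forall>x\<in>\<Omega>. - sphere_laplacian u x = F (u x)) \<and>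
     (\<forall>x. x \<notin> \<Omega> \<longrightarrow> u x = 0)"

definition torsion_function :: "(real^'n) set \<Rightarrow> real^'n \<Rightarrow> real" where
  "torsion_function \<Omega> = (THE w. dirichlet_sol \<Omega> (\<lambda>_. 1) w)"

definition sup_norm_on :: "(real^'n) set \<Rightarrow> (real^'n \<Rightarrow> real) \<Rightarrow> real" where
  "sup_norm_on \<Omega> f = (SUP x\<in>\<Omega>. \<bar>f x\<bar>)"

definition dirichlet_eigenvalue :: "(real^'n) set \<Rightarrow> real \<Rightarrow> bool" where
  "dirichlet_eigenvalue \<Omega> mu \<longleftrightarrow>
     (\<exists>u. dirichlet_sol \<Omega> (\<lambda>s. mu * s) u \<and> (\<exists>x\<in>\<Omega>. u x \<noteq> 0))"

definition principal_eigenvalue :: "(real^'n) set \<Rightarrow> real" where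
  "principal_eigenvalue \<Omega> = Inf {mu. dirichlet_eigenvalue \<Omega> mu}"

definition spherical_cap :: "'n \<Rightarrow> real \<Rightarrow> (real^'n) set" where
  "spherical_cap k \<epsilon> = {x. (\<Sum>i\<in>UNIV. (x$i)^2) = 1 \<and> cos ((1 - \<epsilon>) * pi) < x$k \<and> x$k \<le> 1}"

end

theory Submission
  imports Defs "HOL-Real_Asymp.Real_Asymp"
begin

text \<open>
  In the variable \<open>t = (1 - x\<^sub>k)/2\<close>, the Laplace-Beltrami operator acting on zonal
  functions \<open>u(x) = \<Phi>(t)\<close> is \<open>t(1 - t)\<Phi>'' + (N/2)(1 - 2t)\<Phi>'\<close>, and the cap is
  \<open>{t < t\<^sub>\<epsilon>}\<close>. Let \<open>E\<^sub>l\<close> be the power series solution of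
  \<open>t(1 - t)E'' + (N/2)(1 - 2t)E' = 1 - l E\<close> with \<open>E\<^sub>l(0) = 0\<close>. Then
  \<open>E\<^sub>0(t\<^sub>\<epsilon>) - E\<^sub>0(t)\<close> is the torsion function, so \<open>\<parallel>w\<parallel>\<^sub>\<infinity> = E\<^sub>0(t\<^sub>\<epsilon>)\<close>, and
  \<open>1 - l E\<^sub>l(t)\<close> is an eigenfunction whenever \<open>l E\<^sub>l(t\<^sub>\<epsilon>) = 1\<close>.

  The maximum principle gives \<open>\<mu> \<parallel>w\<parallel>\<^sub>\<infinity> \<ge> 1\<close> for every eigenvalue \<open>\<mu>\<close>. Comparing
  coefficients gives \<open>E\<^sub>l \<ge> (1 - l) E\<^sub>0\<close>, so by the intermediate value theorem there is a
  root \<open>l \<le> 1/(E\<^sub>0(t\<^sub>\<epsilon>) - 2)\<close> as soon as \<open>E\<^sub>0(t\<^sub>\<epsilon>) \<ge> 4\<close>. Then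
  \<open>E\<^sub>0(t\<^sub>\<epsilon>) - 2 \<le> 1/\<lambda>\<^sub>1 \<le> E\<^sub>0(t\<^sub>\<epsilon>)\<close>. Finally \<open>E\<^sub>0(t\<^sub>\<epsilon>) \<rightarrow> \<infinity>\<close> as \<open>\<epsilon> \<rightarrow> 0\<close>, because
  \<open>t\<^sub>\<epsilon> \<rightarrow> 1\<close> and the coefficients of \<open>E\<^sub>0\<close> decay only like \<open>1/n\<close>.
\<close>

section \<open>Coefficients of the zonal series\<close>

text \<open>Comparing coefficients in \<open>t(1 - t)E'' + (N/2)(1 - 2t)E' = 1 - l E\<close>, \<open>E(0) = 0\<close>,
  gives this recursion (see \<open>zonal_series_ode\<close>).\<close>

fun zonal_coeff :: "real \<Rightarrow> real \<Rightarrow> nat \<Rightarrow> real" where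
  "zonal_coeff N l 0 = 0"
| "zonal_coeff N l (Suc 0) = 2 / N"
| "zonal_coeff N l (Suc (Suc n)) =
     ((real n + 1) * (real n + N) - l) / ((real n + 2) * (real n + 1 + N / 2)) * zonal_coeff N l (Suc n)"

lemma zonal_coeff_Suc:
  assumes "n \<ge> 1"
  shows "zonal_coeff N l (Suc n) =
           (real n * (real n + N - 1) - l) / ((real n + 1) * (real n + N / 2)) * zonal_coeff N l n"
  using assms by (cases n) (simp_all add: algebra_simps)

lemma zonal_coeff_recurrence:
  assumes "N \<ge> 2"
  shows "(real n + 1) * (real n + N / 2) * zonal_coeff N l (Suc n) - real n * (real n + N - 1) * zonal_coeff N l n
           = (if n = 0 then 1 else 0) - l * zonal_coeff N l n"
proof (cases "n = 0")
  case False
  have "(real n + 1) * (real n + N / 2) \<noteq> 0" using assms by simp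
  then show ?thesis using False zonal_coeff_Suc[of n N l] by (simp add: field_simps)
qed (use assms in simp)

lemma zonal_coeff_weight_step:
  assumes n: "real n \<ge> 1" and l: "0 \<le> l" "l \<le> 1" and a: "0 \<le> a" "a \<le> l / (real n * (real n + 1))"
  shows "1 - l + l / real (Suc n) \<le> (1 - a) * (1 - l + l / real n)"
proof -
  define A where "A = 1 - l + l / real n"
  have "0 \<le> l / real n" "l / real n \<le> l / 1"
    using n l by (simp, intro divide_left_mono) auto
  then have "a * A \<le> a"
    using a(1) l by (intro mult_left_le) (auto simp: A_def)
  have "1 - l + l / (real n + 1) = A - l / (real n * (real n + 1))"
    using n by (simp add: A_def divide_simps) (simp add: algebra_simps)
  also have "\<dots> \<le> A - a" using a(2) by simp
  also have "\<dots> \<le> (1 - a) * A" using \<open>a * A \<le> a\<close> by (simp add: algebra_simps)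
  finally show ?thesis by (simp add: A_def add.commute)
qed

text \<open>The term \<open>l / n\<close> in the lower bound is what makes the induction go through.\<close>

lemma zonal_coeff_bounds:
  assumes N: "N \<ge> 2" and l: "0 \<le> l" "l \<le> 1" and n: "n \<ge> 1"
  shows "0 < zonal_coeff N 0 n \<and> (1 - l + l / n) * zonal_coeff N 0 n \<le> zonal_coeff N l n
           \<and> zonal_coeff N l n \<le> zonal_coeff N 0 n"
  using n
proof (induction n rule: nat_induct_at_least)
  case base
  then show ?case using N by simp
next
  case (Suc n)
  define r where "r = real n * (real n + N - 1) / ((real n + 1) * (real n + N / 2))"
  define a where "a = l / (real n * (real n + N - 1))"
  have n1: "real n \<ge> 1" using Suc by simp
  have r: "r > 0" using n1 N by (simp add: r_def)
  have step0: "zonal_coeff N 0 (Suc n) = r * zonal_coeff N 0 n"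
    using zonal_coeff_Suc[OF Suc(1), of N 0] by (simp add: r_def)
  have "r * (1 - a) = (real n * (real n + N - 1) - l) / ((real n + 1) * (real n + N / 2))"
    using n1 N unfolding r_def a_def by (simp add: divide_simps)
  then have stepl: "zonal_coeff N l (Suc n) = r * (1 - a) * zonal_coeff N l n"
    using zonal_coeff_Suc[OF Suc(1), of N l] by simp
  have a: "0 \<le> a" "a \<le> l / (real n * (real n + 1))"
    using n1 N l by (auto simp: a_def intro!: divide_left_mono mult_left_mono)
  have "1 * 1 \<le> real n * (real n + 1)" using n1 by (intro mult_mono) auto
  then have "l / (real n * (real n + 1)) \<le> 1" using l by (simp add: divide_le_eq)
  then have a1: "a \<le> 1" using a by linarith
  from Suc.IH have c0: "0 < zonal_coeff N 0 n"
    and lo: "(1 - l + l / real n) * zonal_coeff N 0 n \<le> zonal_coeff N l n"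
    and up: "zonal_coeff N l n \<le> zonal_coeff N 0 n"
    by auto
  have "(1 - l + l / real (Suc n)) * zonal_coeff N 0 (Suc n)
        \<le> r * ((1 - a) * (1 - l + l / real n) * zonal_coeff N 0 n)"
    using zonal_coeff_weight_step[OF n1 l a] c0 r step0 by (simp add: mult_right_mono)
  also have "\<dots> \<le> zonal_coeff N l (Suc n)"
    using lo a1 r stepl by (simp add: mult.assoc mult_left_mono)
  finally have "(1 - l + l / real (Suc n)) * zonal_coeff N 0 (Suc n) \<le> zonal_coeff N l (Suc n)" .
  moreover have "zonal_coeff N l (Suc n) \<le> zonal_coeff N 0 (Suc n)"
  proof -
    have "0 \<le> 1 - l + l / real n" using l by simp
    then have "0 \<le> zonal_coeff N l n"
      using mult_nonneg_nonneg[OF _ less_imp_le[OF c0]] lo by (meson order_trans)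
    then have "(1 - a) * zonal_coeff N l n \<le> 1 * zonal_coeff N 0 n"
      using a(1) up by (intro mult_mono) auto
    then show ?thesis using stepl step0 r by (simp add: mult.assoc)
  qed
  ultimately show ?case using step0 r c0 by simp
qed

lemma zonal_coeff_nonneg:
  assumes "N \<ge> 2" "0 \<le> l" "l \<le> 1"
  shows "0 \<le> zonal_coeff N l n"
proof (cases "n = 0")
  case False
  with zonal_coeff_bounds[OF assms, of n] have
    "0 < zonal_coeff N 0 n" "(1 - l + l / n) * zonal_coeff N 0 n \<le> zonal_coeff N l n"
    by auto
  moreover have "0 \<le> 1 - l + l / n" using assms by simp
  ultimately show ?thesis by (meson mult_nonneg_nonneg less_imp_le order_trans)
qed simp

lemma abs_zonal_coeff_le:
  assumes "N \<ge> 2" "0 \<le> l" "l \<le> 1"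
  shows "\<bar>zonal_coeff N l n\<bar> \<le> zonal_coeff N 0 n"
  using zonal_coeff_nonneg[OF assms, of n] zonal_coeff_bounds[OF assms, of n] by (cases "n = 0") auto

lemma zonal_coeff_lower:
  assumes "N \<ge> 2" "0 \<le> l" "l \<le> 1"
  shows "(1 - l) * zonal_coeff N 0 n \<le> zonal_coeff N l n"
proof (cases "n = 0")
  case False
  with zonal_coeff_bounds[OF assms, of n] have
    "0 < zonal_coeff N 0 n" "(1 - l + l / n) * zonal_coeff N 0 n \<le> zonal_coeff N l n"
    by auto
  moreover have "(1 - l) * zonal_coeff N 0 n \<le> (1 - l + l / n) * zonal_coeff N 0 n"
    using calculation(1) assms by (intro mult_right_mono) auto
  ultimately show ?thesis by linarith
qed simp

lemma zonal_coeff_ge_harmonic: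
  assumes N: "N \<ge> 2" and n: "n \<ge> 1"
  shows "2 / (N * real n) \<le> zonal_coeff N 0 n"
  using n
proof (induction n rule: nat_induct_at_least)
  case (Suc n)
  have n1: "real n \<ge> 1" using Suc by simp
  have "real n * (real n + N / 2) \<le> real n * (real n + N - 1)"
    using N n1 by (intro mult_left_mono) auto
  then have "real n / (real n + 1) \<le> real n * (real n + N - 1) / ((real n + 1) * (real n + N / 2))"
    using N n1 by (simp add: divide_simps)
  then have "real n / (real n + 1) * (2 / (N * real n))
      \<le> real n * (real n + N - 1) / ((real n + 1) * (real n + N / 2)) * zonal_coeff N 0 n"
    using Suc.IH N n1 by (intro mult_mono) auto
  moreover have "2 / (N * real (Suc n)) = real n / (real n + 1) * (2 / (N * real n))"
    using N n1 by (simp add: divide_simps)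
  ultimately have "2 / (N * real (Suc n))
      \<le> real n * (real n + N - 1) / ((real n + 1) * (real n + N / 2)) * zonal_coeff N 0 n"
    by simp
  then show ?case using zonal_coeff_Suc[OF Suc(1), of N 0] by simp
qed simp

lemma conv_radius_zonal_coeff:
  assumes "N \<ge> 2"
  shows "conv_radius (zonal_coeff N 0) = 1"
proof (rule conv_radius_ratio_limit_nonzero)
  have lim: "(\<lambda>n. (real n + 1) * (real n + N / 2) / (real n * (real n + N - 1))) \<longlonglongrightarrow> 1"
    by real_asymp
  show "(\<lambda>n. norm (zonal_coeff N 0 n) / norm (zonal_coeff N 0 (Suc n))) \<longlonglongrightarrow> 1"
  proof (rule Lim_transform_eventually[OF lim], rule eventually_sequentiallyI)
    fix n :: nat assume n: "n \<ge> 1"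
    define q where "q = real n * (real n + N - 1) / ((real n + 1) * (real n + N / 2))"
    have "zonal_coeff N 0 n > 0" "q > 0"
      using zonal_coeff_bounds[OF assms, of 0 n] assms n by (auto simp: q_def)
    moreover have "zonal_coeff N 0 (Suc n) = q * zonal_coeff N 0 n"
      using zonal_coeff_Suc[OF n, of N 0] by (simp add: q_def)
    ultimately have "norm (zonal_coeff N 0 n) / norm (zonal_coeff N 0 (Suc n)) = 1 / q"
      by simp
    then show "(real n + 1) * (real n + N / 2) / (real n * (real n + N - 1))
          = norm (zonal_coeff N 0 n) / norm (zonal_coeff N 0 (Suc n))"
      by (simp add: q_def)
  qed
qed simp_all

lemma summable_zonal_coeff:
  assumes "N \<ge> 2" "0 \<le> l" "l \<le> 1" "\<bar>x\<bar> < 1"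
  shows "summable (\<lambda>n. zonal_coeff N l n * x ^ n)"
proof (rule summable_comparison_test)
  show "summable (\<lambda>n. zonal_coeff N 0 n * \<bar>x\<bar> ^ n)"
    using assms by (intro summable_in_conv_radius) (simp add: conv_radius_zonal_coeff)
  show "\<exists>M. \<forall>n\<ge>M. norm (zonal_coeff N l n * x ^ n) \<le> zonal_coeff N 0 n * \<bar>x\<bar> ^ n"
    using abs_zonal_coeff_le[OF assms(1-3)] by (auto simp: abs_mult power_abs intro!: mult_right_mono)
qed

lemma continuous_on_zonal_coeff_param: "continuous_on UNIV (\<lambda>l. zonal_coeff N l n)"
proof (induction N _ n rule: zonal_coeff.induct)
  case (3 N l n)
  then show ?case by (simp only: zonal_coeff.simps divide_inverse) (intro continuous_intros)
qed simp_all

definition zonal_series :: "real \<Rightarrow> real \<Rightarrow> real \<Rightarrow> real" where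
  "zonal_series N l t = (\<Sum>n. zonal_coeff N l n * t ^ n)"

definition zonal_series_deriv :: "real \<Rightarrow> real \<Rightarrow> real \<Rightarrow> real" where
  "zonal_series_deriv N l t = (\<Sum>n. diffs (zonal_coeff N l) n * t ^ n)"

definition zonal_series_deriv2 :: "real \<Rightarrow> real \<Rightarrow> real \<Rightarrow> real" where
  "zonal_series_deriv2 N l t = (\<Sum>n. diffs (diffs (zonal_coeff N l)) n * t ^ n)"

lemma zonal_series_at_0 [simp]: "zonal_series N l 0 = 0"
  by (simp add: zonal_series_def)

context
  fixes N l :: real
  assumes N: "N \<ge> 2" and l: "0 \<le> l" "l \<le> 1"
begin

lemma summable_zonal_coeff_diffs:
  assumes "\<bar>t\<bar> < 1"
  shows "summable (\<lambda>n. diffs (zonal_coeff N l) n * t ^ n)"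
    and "summable (\<lambda>n. diffs (diffs (zonal_coeff N l)) n * t ^ n)"
  using assms summable_zonal_coeff[OF N l]
  by (auto intro!: termdiff_converges[where K = 1])

lemma has_real_derivative_zonal_series:
  "\<bar>t\<bar> < 1 \<Longrightarrow> (zonal_series N l has_real_derivative zonal_series_deriv N l t) (at t)"
  unfolding zonal_series_def[abs_def] zonal_series_deriv_def
  using summable_zonal_coeff[OF N l] by (intro termdiffs_strong'[where K = 1]) auto

lemma has_real_derivative_zonal_series_deriv:
  "\<bar>t\<bar> < 1 \<Longrightarrow> (zonal_series_deriv N l has_real_derivative zonal_series_deriv2 N l t) (at t)"
  unfolding zonal_series_deriv_def[abs_def] zonal_series_deriv2_def
  using summable_zonal_coeff_diffs(1) by (intro termdiffs_strong'[where K = 1]) auto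

lemma continuous_on_zonal_series_deriv2: "continuous_on {-1<..<1} (zonal_series_deriv2 N l)"
proof (intro continuous_at_imp_continuous_on ballI DERIV_isCont)
  fix t :: real assume "t \<in> {-1<..<1}"
  then show "(zonal_series_deriv2 N l has_real_derivative (\<Sum>n. diffs (diffs (diffs (zonal_coeff N l))) n * t ^ n)) (at t)"
    unfolding zonal_series_deriv2_def[abs_def]
    using summable_zonal_coeff_diffs(2) by (intro termdiffs_strong'[where K = 1]) auto
qed

end

lemma sums_mult_shift:
  fixes a :: "nat \<Rightarrow> real"
  assumes "(\<lambda>n. a n * t ^ n) sums s"
  shows "(\<lambda>n. (case n of 0 \<Rightarrow> 0 | Suc m \<Rightarrow> a m) * t ^ n) sums (t * s)"
proof -
  have "(\<lambda>n. t * (a n * t ^ n)) sums (t * s)" by (rule sums_mult[OF assms])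
  then have "(\<lambda>n. (case Suc n of 0 \<Rightarrow> 0 | Suc m \<Rightarrow> a m) * t ^ Suc n) sums (t * s)"
    by (simp add: algebra_simps)
  then show ?thesis by (subst (asm) sums_Suc_iff) simp
qed

lemma hypergeometric_operator_sums:
  fixes a :: "nat \<Rightarrow> real"
  assumes s1: "(\<lambda>n. diffs a n * t ^ n) sums A1" and s2: "(\<lambda>n. diffs (diffs a) n * t ^ n) sums A2"
  shows "(\<lambda>n. ((real n + 1) * (real n + N / 2) * a (Suc n) - real n * (real n + N - 1) * a n) * t ^ n)
           sums (t * (1 - t) * A2 + N / 2 * (1 - 2 * t) * A1)"
proof -
  define shift :: "(nat \<Rightarrow> real) \<Rightarrow> nat \<Rightarrow> real"
    where "shift b n = (case n of 0 \<Rightarrow> 0 | Suc m \<Rightarrow> b m)" for b n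
  note s2' = sums_mult_shift[OF s2, folded shift_def]
  note s2'' = sums_mult_shift[OF s2', folded shift_def]
  note s1' = sums_mult_shift[OF s1, folded shift_def]
  have "(\<lambda>n. (shift (diffs (diffs a)) n - shift (shift (diffs (diffs a))) n + N / 2 * diffs a n
              - N * shift (diffs a) n) * t ^ n)
        sums (t * A2 - t * (t * A2) + N / 2 * A1 - N * (t * A1))"
    using sums_diff[OF sums_add[OF sums_diff[OF s2' s2''] sums_mult[OF s1, of "N / 2"]] sums_mult[OF s1', of N]]
    by (simp add: algebra_simps)
  moreover have "shift (diffs (diffs a)) n - shift (shift (diffs (diffs a))) n + N / 2 * diffs a n
                   - N * shift (diffs a) n
                 = (real n + 1) * (real n + N / 2) * a (Suc n) - real n * (real n + N - 1) * a n" for n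
    by (cases n; cases "n - 1") (simp_all add: shift_def diffs_def algebra_simps)
  ultimately have "(\<lambda>n. ((real n + 1) * (real n + N / 2) * a (Suc n) - real n * (real n + N - 1) * a n) * t ^ n)
      sums (t * A2 - t * (t * A2) + N / 2 * A1 - N * (t * A1))"
    by simp
  moreover have "t * A2 - t * (t * A2) + N / 2 * A1 - N * (t * A1) = t * (1 - t) * A2 + N / 2 * (1 - 2 * t) * A1"
    by (simp add: algebra_simps)
  ultimately show ?thesis by simp
qed

lemma zonal_series_ode:
  assumes N: "N \<ge> 2" and l: "0 \<le> l" "l \<le> 1" and t: "\<bar>t\<bar> < 1"
  shows "t * (1 - t) * zonal_series_deriv2 N l t + N / 2 * (1 - 2 * t) * zonal_series_deriv N l t
           = 1 - l * zonal_series N l t"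
proof -
  have "(\<lambda>n. diffs (zonal_coeff N l) n * t ^ n) sums zonal_series_deriv N l t"
    "(\<lambda>n. diffs (diffs (zonal_coeff N l)) n * t ^ n) sums zonal_series_deriv2 N l t"
    unfolding zonal_series_deriv_def zonal_series_deriv2_def
    using summable_zonal_coeff_diffs[OF N l t] by (simp_all add: summable_sums)
  from hypergeometric_operator_sums[OF this, of N]
  have "(\<lambda>n. ((if n = 0 then 1 else 0) - l * zonal_coeff N l n) * t ^ n)
          sums (t * (1 - t) * zonal_series_deriv2 N l t + N / 2 * (1 - 2 * t) * zonal_series_deriv N l t)"
    by (simp add: zonal_coeff_recurrence[OF N])
  moreover have "(\<lambda>n. ((if n = 0 then 1 else 0) - l * zonal_coeff N l n) * t ^ n) sums (1 - l * zonal_series N l t)"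
  proof -
    have s0: "(\<lambda>n. zonal_coeff N l n * t ^ n) sums zonal_series N l t"
      unfolding zonal_series_def using summable_zonal_coeff[OF N l t] by (simp add: summable_sums)
    have "(\<lambda>n. ((if n = 0 then 1 else 0) - l * zonal_coeff N l n) * t ^ n)
          = (\<lambda>n. (if n = 0 then 1 else 0) - l * (zonal_coeff N l n * t ^ n))"
      by (auto simp: fun_eq_iff algebra_simps)
    then show ?thesis using sums_diff[OF sums_single[of 0 "\<lambda>_. 1"] sums_mult[OF s0, of l]] by simp
  qed
  ultimately show ?thesis by (rule sums_unique2)
qed

lemma zonal_series_nonneg_mono:
  assumes "N \<ge> 2" "0 \<le> l" "l \<le> 1" and "0 \<le> s" "s \<le> t" "t < 1"
  shows "0 \<le> zonal_series N l s" "zonal_series N l s \<le> zonal_series N l t"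
  using assms zonal_coeff_nonneg[OF assms(1-3)] summable_zonal_coeff[OF assms(1-3)]
  unfolding zonal_series_def by (auto intro!: suminf_nonneg suminf_le mult_left_mono power_mono)

lemma zonal_series_lower:
  assumes N: "N \<ge> 2" and l: "0 \<le> l" "l \<le> 1" and t: "0 \<le> t" "t < 1"
  shows "(1 - l) * zonal_series N 0 t \<le> zonal_series N l t"
proof -
  have "(1 - l) * zonal_series N 0 t = (\<Sum>n. (1 - l) * (zonal_coeff N 0 n * t ^ n))"
    unfolding zonal_series_def using summable_zonal_coeff[OF N, of 0 t] t by (intro suminf_mult[symmetric]) auto
  also have "\<dots> \<le> zonal_series N l t"
    unfolding zonal_series_def using summable_zonal_coeff[OF N, of 0 t] summable_zonal_coeff[OF N l, of t]
      zonal_coeff_lower[OF N l] t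
    by (intro suminf_le summable_mult) (auto simp: mult.assoc[symmetric] intro!: mult_right_mono)
  finally show ?thesis .
qed

lemma continuous_on_zonal_series_param:
  assumes N: "N \<ge> 2" and t: "0 \<le> t" "t < 1"
  shows "continuous_on {0..1} (\<lambda>l. zonal_series N l t)"
  unfolding zonal_series_def
proof (rule uniform_limit_theorem)
  show "\<forall>\<^sub>F n in sequentially. continuous_on {0..1} (\<lambda>l. \<Sum>i<n. zonal_coeff N l i * t ^ i)"
    by (intro always_eventually allI continuous_intros continuous_on_subset[OF continuous_on_zonal_coeff_param] subset_UNIV)
  show "uniform_limit {0..1} (\<lambda>n l. \<Sum>i<n. zonal_coeff N l i * t ^ i) (\<lambda>l. \<Sum>i. zonal_coeff N l i * t ^ i) sequentially"
  proof (rule Weierstrass_m_test)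
    show "summable (\<lambda>n. zonal_coeff N 0 n * t ^ n)" using summable_zonal_coeff[OF N, of 0 t] t by simp
    fix n and l :: real assume "l \<in> {0..1}"
    then show "norm (zonal_coeff N l n * t ^ n) \<le> zonal_coeff N 0 n * t ^ n"
      using abs_zonal_coeff_le[OF N, of l n] t by (simp add: abs_mult mult_right_mono)
  qed
qed simp

lemma not_summable_zonal_coeff:
  assumes N: "N \<ge> 2"
  shows "\<not> summable (zonal_coeff N 0)"
proof
  assume "summable (zonal_coeff N 0)"
  then have "summable (\<lambda>n. N / 2 * zonal_coeff N 0 n)" by (rule summable_mult)
  moreover have "\<forall>n\<ge>1. norm (inverse (real n)) \<le> N / 2 * zonal_coeff N 0 n"
  proof (intro allI impI)
    fix n :: nat assume n: "n \<ge> 1"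
    have "N / 2 * (2 / (N * real n)) \<le> N / 2 * zonal_coeff N 0 n"
      using zonal_coeff_ge_harmonic[OF N n] N by (intro mult_left_mono) auto
    then show "norm (inverse (real n)) \<le> N / 2 * zonal_coeff N 0 n" using N n by (simp add: field_simps)
  qed
  ultimately have "summable (\<lambda>n. inverse (real n))"
    by (metis summable_comparison_test)
  then show False using not_summable_harmonic by blast
qed

lemma filterlim_zonal_series_at_top:
  assumes N: "N \<ge> 2"
  shows "filterlim (zonal_series N 0) at_top (at_left 1)"
  unfolding filterlim_at_top
proof
  fix B :: real
  have "\<exists>M. B + 1 < (\<Sum>i<M. zonal_coeff N 0 i)"
  proof (rule ccontr)
    assume "\<not> ?thesis"
    then have "summable (zonal_coeff N 0)"
      using zonal_coeff_nonneg[OF N] by (intro summableI_nonneg_bounded[where x = "B + 1"]) (auto simp: not_less)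
    then show False using not_summable_zonal_coeff[OF N] by blast
  qed
  then obtain M where M: "B + 1 < (\<Sum>i<M. zonal_coeff N 0 i)" by blast
  define P where "P t = (\<Sum>i<M. zonal_coeff N 0 i * t ^ i)" for t
  have "(P \<longlongrightarrow> P 1) (at_left 1)"
    unfolding P_def by (intro tendsto_intros)
  moreover have "B < P 1" using M by (simp add: P_def)
  ultimately have "\<forall>\<^sub>F t in at_left 1. B < P t" by (rule order_tendstoD(1))
  moreover have "\<forall>\<^sub>F t in at_left (1::real). 0 < t \<and> t < 1"
    unfolding eventually_at_left_field by (intro exI[of _ 0]) auto
  ultimately show "\<forall>\<^sub>F t in at_left 1. B \<le> zonal_series N 0 t"
  proof eventually_elim
    case (elim t)
    have "P t \<le> zonal_series N 0 t"
      unfolding P_def zonal_series_def using elim summable_zonal_coeff[OF N, of 0 t] zonal_coeff_nonneg[OF N, of 0]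
      by (intro sum_le_suminf) auto
    then show ?case using elim by simp
  qed
qed

lemma zonal_series_root_exists:
  assumes N: "N \<ge> 2" and t: "0 \<le> t" "t < 1" and big: "4 \<le> zonal_series N 0 t"
  shows "\<exists>l>0. l \<le> 1 / (zonal_series N 0 t - 2) \<and> l * zonal_series N l t = 1"
proof -
  define E where "E = zonal_series N 0 t"
  define lam where "lam = 1 / (E - 2)"
  have E: "4 \<le> E" using big by (simp add: E_def)
  have lam: "0 < lam" "lam \<le> 1" using E by (auto simp: lam_def field_simps)
  define f where "f l = 1 - l * zonal_series N l t" for l
  have "continuous_on {0..lam} f"
    unfolding f_def using lam t
    by (intro continuous_intros continuous_on_subset[OF continuous_on_zonal_series_param[OF N t]]) auto
  moreover have "f lam \<le> 0"
  proof -
    have "lam * ((1 - lam) * E) = E * (E - 3) / (E - 2)\<^sup>2"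
      using E by (simp add: lam_def field_simps power2_eq_square)
    moreover have "(E - 2)\<^sup>2 \<le> E * (E - 3)" using E by (simp add: power2_eq_square algebra_simps)
    ultimately have "1 \<le> lam * ((1 - lam) * E)" using E by (simp add: le_divide_eq)
    also have "\<dots> \<le> lam * zonal_series N lam t"
      using zonal_series_lower[OF N _ _ t, of lam] lam by (intro mult_left_mono) (auto simp: E_def)
    finally show ?thesis by (simp add: f_def)
  qed
  ultimately obtain l where l: "0 \<le> l" "l \<le> lam" "f l = 0"
    using IVT2'[of f lam 0 0] lam by (auto simp: f_def)
  then have "l \<noteq> 0" by (auto simp: f_def)
  with l show ?thesis by (intro exI[of _ l]) (auto simp: f_def lam_def E_def)
qed

section \<open>Second derivatives on open sets\<close>

definition has_second_derivatives_on ::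
    "'a::real_normed_vector set \<Rightarrow> ('a \<Rightarrow> real) \<Rightarrow> ('a \<Rightarrow> 'a \<Rightarrow> real) \<Rightarrow> ('a \<Rightarrow> 'a \<Rightarrow> 'a \<Rightarrow> real) \<Rightarrow> bool"
  where "has_second_derivatives_on U g D D2 \<longleftrightarrow>
    (\<forall>y\<in>U. (g has_derivative D y) (at y) \<and> (\<forall>b. ((\<lambda>y. D y b) has_derivative D2 y b) (at y)))"

lemma has_second_derivatives_onD:
  assumes "has_second_derivatives_on U g D D2" "y \<in> U"
  shows "(g has_derivative D y) (at y)" "((\<lambda>y. D y b) has_derivative D2 y b) (at y)"
  using assms unfolding has_second_derivatives_on_def by auto

lemma has_second_derivatives_on_diff:
  assumes "has_second_derivatives_on U f D D2" "has_second_derivatives_on U g E E2"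
  shows "has_second_derivatives_on U (\<lambda>y. f y - g y) (\<lambda>y b. D y b - E y b) (\<lambda>y b c. D2 y b c - E2 y b c)"
  using assms unfolding has_second_derivatives_on_def by (auto intro: has_derivative_diff)

lemma has_second_derivatives_on_cmult:
  assumes "has_second_derivatives_on U g D D2"
  shows "has_second_derivatives_on U (\<lambda>y. c * g y) (\<lambda>y b. c * D y b) (\<lambda>y b b'. c * D2 y b b')"
  using assms unfolding has_second_derivatives_on_def by (auto intro: has_derivative_mult_right)

lemma has_second_derivatives_on_cong:
  assumes "open U" "\<And>y. y \<in> U \<Longrightarrow> f y = g y" "has_second_derivatives_on U f D D2"
  shows "has_second_derivatives_on U g D D2"
  using assms unfolding has_second_derivatives_on_def
  by (auto intro: has_derivative_transform_within_open)

lemma C2_on_imp_second_derivatives: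
  assumes "C2_on U g"
  shows "\<exists>D D2. has_second_derivatives_on U g D D2 \<and> (\<forall>b c. continuous_on U (\<lambda>y. D2 y b c))"
proof -
  obtain g' g'' where cont: "continuous_on U g''" and
    d: "\<forall>y\<in>U. (g has_derivative blinfun_apply (g' y)) (at y) \<and> (g' has_derivative blinfun_apply (g'' y)) (at y)"
    using assms unfolding C2_on_def by blast
  have "has_second_derivatives_on U g (\<lambda>y. blinfun_apply (g' y)) (\<lambda>y b c. blinfun_apply (g'' y c) b)"
    unfolding has_second_derivatives_on_def using d by (auto intro!: derivative_eq_intros)
  moreover have "continuous_on U (\<lambda>y. blinfun_apply (g'' y c) b)" for b c
    using cont by (intro continuous_intros)
  ultimately show ?thesis by blast
qed

lemma C2_on_if_second_derivatives:
  fixes g :: "'a::euclidean_space \<Rightarrow> real"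
  assumes d: "has_second_derivatives_on U g D D2" and cont: "\<And>b c. continuous_on U (\<lambda>y. D2 y b c)"
  shows "C2_on U g"
proof -
  define g' where "g' y = (\<Sum>b\<in>Basis. D y b *\<^sub>R blinfun_inner_left b)" for y
  define g'' where "g'' y = (\<Sum>b\<in>Basis. \<Sum>c\<in>Basis. D2 y b c *\<^sub>R
      blinfun_compose (blinfun_scaleR_left (blinfun_inner_left b)) (blinfun_inner_left c))" for y
  have lin: "linear (D y)" "linear (D2 y b)" if "y \<in> U" for y b
    using has_second_derivatives_onD[OF d that] has_derivative_linear by blast+
  have g': "blinfun_apply (g' y) = D y" if "y \<in> U" for y
  proof
    fix v
    have "blinfun_apply (g' y) v = D y (\<Sum>b\<in>Basis. (v \<bullet> b) *\<^sub>R b)"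
      using lin(1)[OF that] unfolding g'_def
      by (simp add: blinfun.sum_left blinfun.scaleR_left linear_sum linear_scale mult.commute inner_commute)
    then show "blinfun_apply (g' y) v = D y v" by (simp add: euclidean_representation)
  qed
  have g'': "blinfun_apply (g'' y) = (\<lambda>w. \<Sum>b\<in>Basis. D2 y b w *\<^sub>R blinfun_inner_left b)" if "y \<in> U" for y
  proof
    fix w
    have "D2 y b w = D2 y b (\<Sum>c\<in>Basis. (w \<bullet> c) *\<^sub>R c)" for b by (simp add: euclidean_representation)
    then show "blinfun_apply (g'' y) w = (\<Sum>b\<in>Basis. D2 y b w *\<^sub>R blinfun_inner_left b)"
      using lin(2)[OF that] unfolding g''_def
      by (simp add: blinfun.sum_left blinfun.scaleR_left linear_sum linear_scale scaleR_sum_left mult.commute)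
  qed
  show ?thesis
    unfolding C2_on_def
  proof (intro exI conjI ballI)
    show "continuous_on U g''" unfolding g''_def by (intro continuous_intros cont)
  next
    fix y assume y: "y \<in> U"
    show "(g has_derivative blinfun_apply (g' y)) (at y)"
      using has_second_derivatives_onD(1)[OF d y] g'[OF y] by simp
    have "(g' has_derivative (\<lambda>w. \<Sum>b\<in>Basis. D2 y b w *\<^sub>R blinfun_inner_left b)) (at y)"
      unfolding g'_def using has_second_derivatives_onD(2)[OF d y] by (auto intro!: derivative_eq_intros)
    then show "(g' has_derivative blinfun_apply (g'' y)) (at y)" using g''[OF y] by simp
  qed
qed

lemma has_real_derivative_along_line:
  fixes g :: "'a::real_normed_vector \<Rightarrow> real"
  assumes "(g has_derivative D) (at (x + s *\<^sub>R e))"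
  shows "((\<lambda>t. g (x + t *\<^sub>R e)) has_real_derivative D e) (at s)"
proof -
  have "((\<lambda>t. x + t *\<^sub>R e) has_derivative (\<lambda>h. h *\<^sub>R e)) (at s)"
    by (auto intro!: derivative_eq_intros)
  from has_derivative_compose[OF this assms]
  have "((\<lambda>t. g (x + t *\<^sub>R e)) has_derivative (\<lambda>h. D (h *\<^sub>R e))) (at s)" .
  moreover have "(\<lambda>h. D (h *\<^sub>R e)) = (*) (D e)"
    using has_derivative_linear[OF assms] by (simp add: fun_eq_iff linear_scale mult.commute)
  ultimately show ?thesis unfolding has_field_derivative_def by simp
qed

lemma eventually_line_in_open:
  fixes x e :: "'a::real_normed_vector"
  assumes "open U" "x \<in> U"
  shows "\<forall>\<^sub>F t in nhds 0. x + t *\<^sub>R e \<in> U"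
proof -
  have "open ((\<lambda>t::real. x + t *\<^sub>R e) -` U)"
    using assms(1) by (intro continuous_open_vimage continuous_intros)
  then show ?thesis using eventually_nhds_in_open assms(2) by fastforce
qed

lemma second_derivative_along_line:
  fixes g :: "'a::real_normed_vector \<Rightarrow> real"
  assumes U: "open U" "x \<in> U" and d: "has_second_derivatives_on U g D D2"
  shows "deriv (deriv (\<lambda>t. g (x + t *\<^sub>R e))) 0 = D2 x e e"
proof -
  have "\<forall>\<^sub>F t in nhds 0. deriv (\<lambda>t. g (x + t *\<^sub>R e)) t = D (x + t *\<^sub>R e) e"
    using eventually_line_in_open[OF U]
    by eventually_elim (rule DERIV_imp_deriv, rule has_real_derivative_along_line, rule has_second_derivatives_onD(1)[OF d])
  then have "deriv (deriv (\<lambda>t. g (x + t *\<^sub>R e))) 0 = deriv (\<lambda>t. D (x + t *\<^sub>R e) e) 0"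
    by (rule deriv_cong_ev) simp
  also have "\<dots> = D2 x e e"
    using has_real_derivative_along_line[of "\<lambda>y. D y e" "D2 x e" x 0 e] has_second_derivatives_onD(2)[OF d U(2)]
    by (intro DERIV_imp_deriv) simp
  finally show ?thesis .
qed

lemma eucl_laplacian_eq_sum_second_derivatives:
  fixes g :: "real^'n \<Rightarrow> real"
  assumes "open U" "x \<in> U" "has_second_derivatives_on U g D D2"
  shows "eucl_laplacian g x = (\<Sum>i\<in>UNIV. D2 x (axis i 1) (axis i 1))"
  unfolding eucl_laplacian_def using second_derivative_along_line[OF assms] by simp

lemma second_derivative_nonpos_at_local_max:
  fixes \<phi> \<phi>' :: "real \<Rightarrow> real"
  assumes ev: "\<forall>\<^sub>F t in nhds 0. (\<phi> has_real_derivative \<phi>' t) (at t) \<and> \<phi> t \<le> \<phi> 0"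
    and d2: "(\<phi>' has_real_derivative c) (at 0)"
  shows "c \<le> 0"
proof (rule ccontr)
  assume "\<not> c \<le> 0"
  from ev obtain d where d: "d > 0"
    "\<And>t. \<bar>t\<bar> < d \<Longrightarrow> (\<phi> has_real_derivative \<phi>' t) (at t) \<and> \<phi> t \<le> \<phi> 0"
    unfolding eventually_nhds_metric dist_real_def by auto
  have "\<phi>' 0 = 0"
    by (rule DERIV_local_max[of \<phi> _ 0 d]) (use d in auto)
  moreover obtain d' where d': "d' > 0" "\<And>h. 0 < h \<Longrightarrow> h < d' \<Longrightarrow> \<phi>' 0 < \<phi>' (0 + h)"
    using DERIV_pos_inc_right[OF d2] \<open>\<not> c \<le> 0\<close> by auto
  define s where "s = min d d' / 2"
  have s: "0 < s" "s < d" "s < d'" using d d' by (auto simp: s_def)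
  obtain z where z: "0 < z" "z < s" "\<phi> s - \<phi> 0 = (s - 0) * \<phi>' z"
    using MVT2[OF s(1), of \<phi> \<phi>'] d(2) s by force
  ultimately have "\<phi>' z > 0" using d'(2)[of z] s by simp
  then have "0 < (s - 0) * \<phi>' z" using s(1) by simp
  then have "\<phi> s > \<phi> 0" using z(3) by linarith
  then show False using d(2)[of s] s by simp
qed

lemma second_derivative_nonpos_at_max:
  fixes g :: "'a::real_normed_vector \<Rightarrow> real"
  assumes U: "open U" "x \<in> U" and d: "has_second_derivatives_on U g D D2"
    and max: "\<And>y. y \<in> U \<Longrightarrow> g y \<le> g x"
  shows "D2 x e e \<le> 0"
proof (rule second_derivative_nonpos_at_local_max)
  show "\<forall>\<^sub>F t in nhds 0. ((\<lambda>t. g (x + t *\<^sub>R e)) has_real_derivative D (x + t *\<^sub>R e) e) (at t)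
      \<and> g (x + t *\<^sub>R e) \<le> g (x + 0 *\<^sub>R e)"
    using eventually_line_in_open[OF U, of e]
  proof eventually_elim
    case (elim t)
    then show ?case
      using has_real_derivative_along_line[OF has_second_derivatives_onD(1)[OF d elim]] max[OF elim] by simp
  qed
  show "((\<lambda>t. D (x + t *\<^sub>R e) e) has_real_derivative D2 x e e) (at 0)"
    using has_real_derivative_along_line[of "\<lambda>y. D y e" "D2 x e" x 0 e] has_second_derivatives_onD(2)[OF d U(2)]
    by simp
qed

section \<open>Dirichlet problems on domains of the sphere\<close>

definition dirichlet_admissible :: "(real^'n) set \<Rightarrow> (real^'n \<Rightarrow> real) \<Rightarrow> bool" where
  "dirichlet_admissible \<Omega> u \<longleftrightarrow>
     C2_on (cone_over \<Omega>) (hom0_ext u) \<and> continuous_on (closure \<Omega>) u \<and> (\<forall>x. x \<notin> \<Omega> \<longrightarrow> u x = 0)"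

lemma dirichlet_sol_iff_admissible:
  "dirichlet_sol \<Omega> F u \<longleftrightarrow> dirichlet_admissible \<Omega> u \<and> (\<forall>x\<in>\<Omega>. - sphere_laplacian u x = F (u x))"
  unfolding dirichlet_sol_def dirichlet_admissible_def by auto

lemma hom0_ext_cmult: "hom0_ext (\<lambda>x. c * u x) = (\<lambda>y. c * hom0_ext u y)"
  by (simp add: hom0_ext_def fun_eq_iff)

lemma C2_on_cmult:
  fixes g :: "'a::euclidean_space \<Rightarrow> real"
  assumes "C2_on U g"
  shows "C2_on U (\<lambda>y. c * g y)"
proof -
  obtain D D2 where "has_second_derivatives_on U g D D2" and "\<And>b b'. continuous_on U (\<lambda>y. D2 y b b')"
    using C2_on_imp_second_derivatives[OF assms] by blast
  then show ?thesis
    by (intro C2_on_if_second_derivatives[OF has_second_derivatives_on_cmult] continuous_on_mult_left)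
qed

lemma dirichlet_admissible_cmult:
  "dirichlet_admissible \<Omega> u \<Longrightarrow> dirichlet_admissible \<Omega> (\<lambda>x. c * u x)"
  unfolding dirichlet_admissible_def hom0_ext_cmult by (auto intro: C2_on_cmult continuous_on_mult_left)

lemma C2_on_zero: "C2_on U (\<lambda>_. 0)"
  by (rule C2_on_if_second_derivatives[of U _ "\<lambda>_ _. 0" "\<lambda>_ _ _. 0"])
     (simp_all add: has_second_derivatives_on_def)

lemma dirichlet_admissible_zero: "dirichlet_admissible \<Omega> (\<lambda>_. 0)"
  by (simp add: dirichlet_admissible_def hom0_ext_def[abs_def] C2_on_zero)

locale sphere_domain =
  fixes \<Omega> :: "(real^'n::finite) set"
  assumes subset_sphere: "\<Omega> \<subseteq> sphere 0 1"
    and open_cone: "open (cone_over \<Omega>)"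
begin

lemma in_cone_over: "x \<in> \<Omega> \<Longrightarrow> x \<in> cone_over \<Omega>"
  using subset_sphere unfolding cone_over_def by auto

lemma compact_closure_domain: "compact (closure \<Omega>)"
  using subset_sphere by (meson bounded_subset compact_closure bounded_sphere)

lemma sphere_laplacian_cmult:
  assumes "C2_on (cone_over \<Omega>) (hom0_ext u)" "x \<in> \<Omega>"
  shows "sphere_laplacian (\<lambda>x. c * u x) x = c * sphere_laplacian u x"
proof -
  obtain D D2 where d: "has_second_derivatives_on (cone_over \<Omega>) (hom0_ext u) D D2"
    using assms(1) by (blast dest: C2_on_imp_second_derivatives)
  show ?thesis
    unfolding sphere_laplacian_def hom0_ext_cmult
    using eucl_laplacian_eq_sum_second_derivatives[OF open_cone in_cone_over[OF assms(2)] d]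
      eucl_laplacian_eq_sum_second_derivatives[OF open_cone in_cone_over[OF assms(2)] has_second_derivatives_on_cmult[OF d]]
    by (simp add: sum_distrib_left)
qed

lemma sphere_laplacian_le_at_max:
  assumes u1: "C2_on (cone_over \<Omega>) (hom0_ext u1)" and u2: "C2_on (cone_over \<Omega>) (hom0_ext u2)"
    and x0: "x0 \<in> \<Omega>" and max: "\<And>x. x \<in> \<Omega> \<Longrightarrow> u1 x - u2 x \<le> u1 x0 - u2 x0"
  shows "sphere_laplacian u1 x0 \<le> sphere_laplacian u2 x0"
proof -
  obtain D1 D1' where d1: "has_second_derivatives_on (cone_over \<Omega>) (hom0_ext u1) D1 D1'"
    using u1 by (blast dest: C2_on_imp_second_derivatives)
  obtain D2 D2' where d2: "has_second_derivatives_on (cone_over \<Omega>) (hom0_ext u2) D2 D2'"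
    using u2 by (blast dest: C2_on_imp_second_derivatives)
  note x0c = in_cone_over[OF x0]
  have "D1' x0 e e - D2' x0 e e \<le> 0" for e
  proof (rule second_derivative_nonpos_at_max[OF open_cone x0c has_second_derivatives_on_diff[OF d1 d2]])
    fix y assume "y \<in> cone_over \<Omega>"
    then show "hom0_ext u1 y - hom0_ext u2 y \<le> hom0_ext u1 x0 - hom0_ext u2 x0"
      using max x0 subset_sphere unfolding cone_over_def hom0_ext_def by auto
  qed
  then show ?thesis
    unfolding sphere_laplacian_def
      eucl_laplacian_eq_sum_second_derivatives[OF open_cone x0c d1]
      eucl_laplacian_eq_sum_second_derivatives[OF open_cone x0c d2]
    by (intro sum_mono) simp
qed

lemma dirichlet_comparison:
  assumes u1: "dirichlet_admissible \<Omega> u1" and u2: "dirichlet_admissible \<Omega> u2"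
    and lap: "\<And>x. x \<in> \<Omega> \<Longrightarrow> sphere_laplacian u2 x < sphere_laplacian u1 x"
  shows "u1 x \<le> u2 x"
proof (cases "x \<in> closure \<Omega>")
  case True
  then have "closure \<Omega> \<noteq> {}" by auto
  then obtain p where p: "p \<in> closure \<Omega>" and max: "\<And>y. y \<in> closure \<Omega> \<Longrightarrow> u1 y - u2 y \<le> u1 p - u2 p"
    using continuous_attains_sup[OF compact_closure_domain _ continuous_on_diff, of u1 u2] u1 u2
    unfolding dirichlet_admissible_def by blast
  have "p \<notin> \<Omega>"
  proof
    assume "p \<in> \<Omega>"
    then have "sphere_laplacian u1 p \<le> sphere_laplacian u2 p"
      using u1 u2 max closure_subset unfolding dirichlet_admissible_def
      by (intro sphere_laplacian_le_at_max) auto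
    with lap[OF \<open>p \<in> \<Omega>\<close>] show False by simp
  qed
  then show ?thesis using max[OF True] u1 u2 unfolding dirichlet_admissible_def by simp
next
  case False
  then have "x \<notin> \<Omega>" using closure_subset by blast
  then show ?thesis using u1 u2 unfolding dirichlet_admissible_def by simp
qed

lemma torsion_function_eqI:
  assumes w: "dirichlet_sol \<Omega> (\<lambda>_. 1) w"
  shows "torsion_function \<Omega> = w"
proof -
  have le: "u x \<le> v x" if u: "dirichlet_sol \<Omega> (\<lambda>_. 1) u" and v: "dirichlet_sol \<Omega> (\<lambda>_. 1) v" for u v x
  proof (rule field_le_mult_one_interval)
    fix z :: real assume z: "0 < z" "z < 1"
    show "z * u x \<le> v x"
    proof (rule dirichlet_comparison)
      show "dirichlet_admissible \<Omega> (\<lambda>x. z * u x)" "dirichlet_admissible \<Omega> v"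
        using u v by (auto simp: dirichlet_sol_iff_admissible intro: dirichlet_admissible_cmult)
      fix y assume "y \<in> \<Omega>"
      then show "sphere_laplacian v y < sphere_laplacian (\<lambda>x. z * u x) y"
        using u v z sphere_laplacian_cmult[of u y z] by (auto simp: dirichlet_sol_def)
    qed
  qed
  show ?thesis
    unfolding torsion_function_def
  proof (rule the_equality)
    fix u assume u: "dirichlet_sol \<Omega> (\<lambda>_. 1) u"
    show "u = w"
    proof
      fix x show "u x = w x" using le[OF u w, of x] le[OF w u, of x] by simp
    qed
  qed (rule w)
qed

lemma eigenfunction_cmult:
  assumes "dirichlet_sol \<Omega> (\<lambda>s. \<mu> * s) u"
  shows "dirichlet_sol \<Omega> (\<lambda>s. \<mu> * s) (\<lambda>x. c * u x)"
proof -
  have "dirichlet_admissible \<Omega> u" and lap: "\<And>x. x \<in> \<Omega> \<Longrightarrow> - sphere_laplacian u x = \<mu> * u x"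
    using assms by (auto simp: dirichlet_sol_iff_admissible)
  moreover have "C2_on (cone_over \<Omega>) (hom0_ext u)"
    using assms by (simp add: dirichlet_sol_def)
  moreover have "- sphere_laplacian (\<lambda>x. c * u x) x = \<mu> * (c * u x)" if "x \<in> \<Omega>" for x
  proof -
    have "- sphere_laplacian (\<lambda>x. c * u x) x = c * (- sphere_laplacian u x)"
      using sphere_laplacian_cmult[OF \<open>C2_on (cone_over \<Omega>) (hom0_ext u)\<close> that] by simp
    also have "\<dots> = \<mu> * (c * u x)" using lap[OF that] by simp
    finally show ?thesis .
  qed
  ultimately show ?thesis by (auto simp: dirichlet_sol_iff_admissible intro: dirichlet_admissible_cmult)
qed

lemma eigenfunction_positive_max:
  assumes "dirichlet_eigenvalue \<Omega> \<mu>"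
  obtains v p where "dirichlet_sol \<Omega> (\<lambda>s. \<mu> * s) v" "p \<in> \<Omega>" "0 < v p"
    "\<And>x. x \<in> closure \<Omega> \<Longrightarrow> v x \<le> v p"
proof -
  obtain u x1 where u: "dirichlet_sol \<Omega> (\<lambda>s. \<mu> * s) u" and x1: "x1 \<in> \<Omega>" "u x1 \<noteq> 0"
    using assms unfolding dirichlet_eigenvalue_def by blast
  define v where "v x = sgn (u x1) * u x" for x
  have v: "dirichlet_sol \<Omega> (\<lambda>s. \<mu> * s) v" unfolding v_def by (rule eigenfunction_cmult[OF u])
  then have va: "dirichlet_admissible \<Omega> v" by (simp add: dirichlet_sol_iff_admissible)
  obtain p where "p \<in> closure \<Omega>" and max: "\<And>x. x \<in> closure \<Omega> \<Longrightarrow> v x \<le> v p"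
    using continuous_attains_sup[OF compact_closure_domain, of v] va x1(1) closure_subset
    unfolding dirichlet_admissible_def by blast
  have "0 < v x1" using x1(2) by (cases "u x1 > 0") (auto simp: v_def)
  also have "\<dots> \<le> v p" using max[of x1] x1(1) closure_subset by auto
  finally have "0 < v p" .
  moreover from this have "p \<in> \<Omega>" using va unfolding dirichlet_admissible_def by force
  ultimately show thesis using that v max by blast
qed

text \<open>If \<open>v\<close> is an eigenfunction with maximum \<open>v(p) > 0\<close>, then \<open>-\<Delta>v = \<mu> v \<le> \<mu> v(p) < t = -\<Delta>(t w)\<close>
  for every \<open>t > \<mu> v(p)\<close>, so comparison gives \<open>v(p) \<le> t w(p)\<close>.\<close>

lemma dirichlet_eigenvalue_ge:
  assumes "dirichlet_eigenvalue \<Omega> \<mu>" and w: "dirichlet_sol \<Omega> (\<lambda>_. 1) w"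
    and wT: "\<And>x. x \<in> \<Omega> \<Longrightarrow> w x \<le> T"
  shows "1 \<le> \<mu> * T"
proof -
  obtain v p where v: "dirichlet_sol \<Omega> (\<lambda>s. \<mu> * s) v" and p: "p \<in> \<Omega>" "0 < v p"
    and max: "\<And>x. x \<in> closure \<Omega> \<Longrightarrow> v x \<le> v p"
    using eigenfunction_positive_max[OF assms(1)] by blast
  have va: "dirichlet_admissible \<Omega> v" and lap: "\<And>x. x \<in> \<Omega> \<Longrightarrow> - sphere_laplacian v x = \<mu> * v x"
    using v by (auto simp: dirichlet_sol_iff_admissible)
  have "sphere_laplacian v p \<le> sphere_laplacian (\<lambda>_. 0) p"
    using va dirichlet_admissible_zero max closure_subset p(1)
    by (intro sphere_laplacian_le_at_max) (auto simp: dirichlet_admissible_def)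
  then have "0 \<le> \<mu> * v p" using lap[OF p(1)] by (simp add: sphere_laplacian_def eucl_laplacian_def hom0_ext_def)
  then have \<mu>: "0 \<le> \<mu>" using p(2) by (simp add: zero_le_mult_iff)
  have wC2: "C2_on (cone_over \<Omega>) (hom0_ext w)" and wlap: "\<And>x. x \<in> \<Omega> \<Longrightarrow> sphere_laplacian w x = -1"
    using w by (auto simp: dirichlet_sol_def)
  have bound: "v p \<le> t * T" if t: "\<mu> * v p < t" for t
  proof -
    have "v p \<le> t * w p"
    proof (rule dirichlet_comparison[OF va])
      show "dirichlet_admissible \<Omega> (\<lambda>x. t * w x)"
        using w by (auto simp: dirichlet_sol_iff_admissible intro: dirichlet_admissible_cmult)
      fix x assume x: "x \<in> \<Omega>"
      have "\<mu> * v x \<le> \<mu> * v p" using max[of x] x closure_subset \<mu> by (auto intro: mult_left_mono)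
      then show "sphere_laplacian (\<lambda>x. t * w x) x < sphere_laplacian v x"
        using sphere_laplacian_cmult[OF wC2 x, of t] wlap[OF x] lap[OF x] t by simp
    qed
    also have "\<dots> \<le> t * T"
      using wT[OF p(1)] \<open>0 \<le> \<mu> * v p\<close> t by (intro mult_left_mono) auto
    finally show ?thesis .
  qed
  have "0 < T"
  proof (rule ccontr)
    assume "\<not> 0 < T"
    then have "(\<mu> * v p + 1) * T \<le> 0"
      using \<open>0 \<le> \<mu> * v p\<close> by (intro mult_nonneg_nonpos) auto
    then show False using bound[of "\<mu> * v p + 1"] p(2) by simp
  qed
  have "v p / T \<le> \<mu> * v p"
    by (rule dense_ge) (use bound \<open>0 < T\<close> in \<open>simp add: divide_le_eq\<close>)
  then show ?thesis using p(2) \<open>0 < T\<close> by (simp add: divide_le_eq mult.commute mult.left_commute)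
qed

end

section \<open>Zonal functions\<close>

text \<open>For \<open>x\<close> on the sphere, \<open>polar k x = (1 - x\<^sub>k)/2 = sin\<^sup>2(\<theta>/2)\<close> with \<open>\<theta>\<close> the geodesic
  distance from \<open>x\<close> to the pole \<open>e\<^sub>k\<close>; off the sphere it is extended homogeneously of degree 0.\<close>

definition polar :: "'n \<Rightarrow> real^'n \<Rightarrow> real" where
  "polar k y = (1 - y $ k / norm y) / 2"

definition polar_deriv :: "'n \<Rightarrow> real^'n \<Rightarrow> real^'n \<Rightarrow> real" where
  "polar_deriv k y b = (y $ k * (y \<bullet> b) / norm y ^ 3 - b $ k / norm y) / 2"

definition polar_deriv2 :: "'n \<Rightarrow> real^'n \<Rightarrow> real^'n \<Rightarrow> real^'n \<Rightarrow> real" where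
  "polar_deriv2 k y b c =
     ((b $ k * (y \<bullet> c) + c $ k * (y \<bullet> b) + y $ k * (b \<bullet> c)) / norm y ^ 3
      - 3 * y $ k * (y \<bullet> b) * (y \<bullet> c) / norm y ^ 5) / 2"

lemma has_derivative_polar:
  assumes y: "y \<noteq> 0"
  shows "(polar k has_derivative polar_deriv k y) (at y)"
  unfolding polar_def[abs_def]
  by (rule has_derivative_eq_rhs[OF has_derivative_divide[OF has_derivative_diff[OF has_derivative_const
        has_derivative_divide[OF bounded_linear.has_derivative[OF bounded_linear_vec_nth has_derivative_ident]
          has_derivative_norm[OF y]]] has_derivative_const]])
     (use y in \<open>auto simp: fun_eq_iff polar_deriv_def sgn_div_norm inner_commute field_simps power3_eq_cube\<close>)

lemma has_derivative_polar_deriv: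
  assumes y: "y \<noteq> 0"
  shows "((\<lambda>y. polar_deriv k y b) has_derivative polar_deriv2 k y b) (at y)"
proof -
  have cube: "((\<lambda>y. norm y ^ 3) has_derivative (\<lambda>c. 3 * (y \<bullet> c) * norm y)) (at y)"
    by (rule has_derivative_eq_rhs[OF has_derivative_power[OF has_derivative_norm[OF y]]])
       (use y in \<open>simp add: fun_eq_iff sgn_div_norm inner_commute field_simps power2_eq_square\<close>)
  show ?thesis
    unfolding polar_deriv_def
    by (rule has_derivative_eq_rhs[OF has_derivative_divide[OF has_derivative_diff[OF
          has_derivative_divide[OF has_derivative_mult[OF
            bounded_linear.has_derivative[OF bounded_linear_vec_nth has_derivative_ident]
            has_derivative_inner_left[OF has_derivative_ident]] cube]
          has_derivative_divide[OF has_derivative_const has_derivative_norm[OF y]]] has_derivative_const]])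
       (use y in \<open>simp_all add: fun_eq_iff polar_deriv2_def sgn_div_norm inner_commute field_simps,
         simp add: algebra_simps eval_nat_numeral\<close>)
qed

lemma axis_nth_eq: "axis i x $ j = (if j = i then x else 0)"
  by (simp add: axis_def)

lemma sum_polar_deriv_sq:
  fixes y :: "real^'n"
  assumes y: "norm y = 1"
  shows "(\<Sum>i\<in>UNIV. polar_deriv k y (axis i 1) * polar_deriv k y (axis i 1)) = polar k y * (1 - polar k y)"
proof -
  have "(\<Sum>i\<in>UNIV. polar_deriv k y (axis i 1) * polar_deriv k y (axis i 1))
        = (\<Sum>i\<in>UNIV. (if i = k then 1 else 0) - 2 * y $ k * (if i = k then y $ i else 0) + (y $ k)\<^sup>2 * (y $ i)\<^sup>2) / 4"
    unfolding sum_divide_distrib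
    using y by (intro sum.cong refl) (cases "i = k"; simp add: polar_deriv_def inner_axis axis_nth_eq power2_eq_square field_simps)
  also have "\<dots> = (1 - 2 * y $ k * y $ k + (y $ k)\<^sup>2 * (\<Sum>i\<in>UNIV. (y $ i)\<^sup>2)) / 4"
    by (simp add: sum.distrib sum_subtractf sum_distrib_left[symmetric])
  also have "(\<Sum>i\<in>UNIV. (y $ i)\<^sup>2) = 1"
    using y by (simp add: norm_eq_1 inner_vec_def power2_eq_square)
  finally show ?thesis
    using y by (simp add: polar_def field_simps power2_eq_square)
qed

lemma sum_polar_deriv2:
  fixes y :: "real^'n"
  assumes y: "norm y = 1"
  shows "(\<Sum>i\<in>UNIV. polar_deriv2 k y (axis i 1) (axis i 1)) = (real CARD('n) - 1) / 2 * (1 - 2 * polar k y)"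
proof -
  have "(\<Sum>i\<in>UNIV. polar_deriv2 k y (axis i 1) (axis i 1))
        = (\<Sum>i\<in>UNIV. 2 * (if i = k then y $ i else 0) + y $ k - 3 * y $ k * (y $ i)\<^sup>2) / 2"
    unfolding sum_divide_distrib
    using y by (intro sum.cong refl) (cases "i = k"; simp add: polar_deriv2_def inner_axis axis_nth_eq inner_axis_axis power2_eq_square)
  also have "\<dots> = (2 * y $ k + real CARD('n) * y $ k - 3 * y $ k * (\<Sum>i\<in>UNIV. (y $ i)\<^sup>2)) / 2"
    by (simp add: sum.distrib sum_subtractf sum_distrib_left[symmetric])
  also have "(\<Sum>i\<in>UNIV. (y $ i)\<^sup>2) = 1"
    using y by (simp add: norm_eq_1 inner_vec_def power2_eq_square)
  finally show ?thesis
    using y by (simp add: polar_def field_simps)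
qed

context
  fixes \<Phi> \<Phi>' \<Phi>'' :: "real \<Rightarrow> real" and S :: "real set" and U :: "(real^'n) set" and k :: 'n
  assumes U: "\<And>y. y \<in> U \<Longrightarrow> y \<noteq> 0 \<and> polar k y \<in> S"
    and d1: "\<And>t. t \<in> S \<Longrightarrow> (\<Phi> has_real_derivative \<Phi>' t) (at t)"
    and d2: "\<And>t. t \<in> S \<Longrightarrow> (\<Phi>' has_real_derivative \<Phi>'' t) (at t)"
begin

lemma has_second_derivatives_on_zonal:
  "has_second_derivatives_on U (\<lambda>y. \<Phi> (polar k y)) (\<lambda>y b. \<Phi>' (polar k y) * polar_deriv k y b)
     (\<lambda>y b c. \<Phi>'' (polar k y) * polar_deriv k y c * polar_deriv k y b + \<Phi>' (polar k y) * polar_deriv2 k y b c)"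
  unfolding has_second_derivatives_on_def
proof (intro ballI conjI allI)
  fix y b assume "y \<in> U"
  then have y: "y \<noteq> 0" and t: "polar k y \<in> S" using U by auto
  have "((\<lambda>y. \<Phi> (polar k y)) has_derivative (\<lambda>b. polar_deriv k y b * \<Phi>' (polar k y))) (at y)"
    by (rule DERIV_compose_FDERIV[OF d1[OF t] has_derivative_polar[OF y]])
  then show "((\<lambda>y. \<Phi> (polar k y)) has_derivative (\<lambda>b. \<Phi>' (polar k y) * polar_deriv k y b)) (at y)"
    by (simp add: mult.commute)
  have "((\<lambda>y. \<Phi>' (polar k y)) has_derivative (\<lambda>c. polar_deriv k y c * \<Phi>'' (polar k y))) (at y)"
    by (rule DERIV_compose_FDERIV[OF d2[OF t] has_derivative_polar[OF y]])
  from has_derivative_mult[OF this has_derivative_polar_deriv[OF y, of k b]]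
  show "((\<lambda>y. \<Phi>' (polar k y) * polar_deriv k y b) has_derivative
          (\<lambda>c. \<Phi>'' (polar k y) * polar_deriv k y c * polar_deriv k y b + \<Phi>' (polar k y) * polar_deriv2 k y b c)) (at y)"
    by (simp add: algebra_simps)
qed

lemma continuous_on_zonal_second_derivative:
  assumes "continuous_on S \<Phi>''"
  shows "continuous_on U (\<lambda>y. \<Phi>'' (polar k y) * polar_deriv k y c * polar_deriv k y b + \<Phi>' (polar k y) * polar_deriv2 k y b c)"
proof -
  have n: "\<And>y. y \<in> U \<Longrightarrow> norm y \<noteq> 0" using U by auto
  have polar: "continuous_on U (polar k)"
    unfolding polar_def[abs_def] using n by (intro continuous_intros) auto
  have "continuous_on S \<Phi>'"
    by (intro continuous_at_imp_continuous_on ballI DERIV_isCont[OF d2])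
  then have "continuous_on U (\<lambda>y. \<Phi>' (polar k y))" "continuous_on U (\<lambda>y. \<Phi>'' (polar k y))"
    using assms U by (auto intro!: continuous_on_compose2[OF _ polar])
  then show ?thesis
    unfolding polar_deriv_def polar_deriv2_def using n by (intro continuous_intros) auto
qed

end

text \<open>The value of \<open>(1 - x\<^sub>k)/2\<close> on the boundary of \<open>spherical_cap k \<epsilon>\<close>.\<close>

definition cap_edge :: "real \<Rightarrow> real" where
  "cap_edge \<epsilon> = (1 - cos ((1 - \<epsilon>) * pi)) / 2"

definition cap_zonal :: "'n \<Rightarrow> real \<Rightarrow> (real \<Rightarrow> real) \<Rightarrow> real^'n \<Rightarrow> real" where
  "cap_zonal k \<epsilon> \<Phi> x = (if x \<in> spherical_cap k \<epsilon> then \<Phi> ((1 - x $ k) / 2) else 0)"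

lemma cap_edge_bounds:
  assumes "0 < \<epsilon>" "\<epsilon> < 1"
  shows "0 < cap_edge \<epsilon>" "cap_edge \<epsilon> < 1"
proof -
  have "cos ((1 - \<epsilon>) * pi) = - cos (\<epsilon> * pi)" by (simp add: algebra_simps)
  moreover have "cos pi < cos (\<epsilon> * pi)" "cos (\<epsilon> * pi) < cos 0"
    using assms by (intro cos_monotone_0_pi; simp)+
  ultimately show "0 < cap_edge \<epsilon>" "cap_edge \<epsilon> < 1" by (auto simp: cap_edge_def)
qed

lemma spherical_cap_eq:
  fixes k :: "'n::finite"
  shows "spherical_cap k \<epsilon> = {x. norm x = 1 \<and> cos ((1 - \<epsilon>) * pi) < x $ k}"
proof -
  have "norm x = 1 \<Longrightarrow> x $ k \<le> 1" for x :: "real^'n"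
    using component_le_norm_cart[of x k] by simp
  moreover have "(\<Sum>i\<in>UNIV. (x $ i)\<^sup>2) = 1 \<longleftrightarrow> norm x = 1" for x :: "real^'n"
    by (simp add: norm_eq_1 inner_vec_def power2_eq_square)
  ultimately show ?thesis unfolding spherical_cap_def by blast
qed

lemma cone_over_spherical_cap:
  fixes k :: "'n::finite"
  shows "cone_over (spherical_cap k \<epsilon>) = {y. cos ((1 - \<epsilon>) * pi) * norm y < y $ k}"
proof -
  have "y \<noteq> 0 \<and> norm (y /\<^sub>R norm y) = 1 \<and> cos ((1 - \<epsilon>) * pi) < (y /\<^sub>R norm y) $ k
        \<longleftrightarrow> cos ((1 - \<epsilon>) * pi) * norm y < y $ k" for y :: "real^'n"
  proof (cases "y = 0")
    case False
    have "(y /\<^sub>R norm y) $ k = y $ k / norm y" by (simp add: divide_inverse_commute)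
    then show ?thesis using False by (simp add: pos_less_divide_eq)
  qed simp
  then show ?thesis unfolding cone_over_def spherical_cap_eq by blast
qed

lemma sphere_domain_spherical_cap: "sphere_domain (spherical_cap k \<epsilon>)"
proof
  show "spherical_cap k \<epsilon> \<subseteq> sphere 0 1" by (auto simp: spherical_cap_eq)
  show "open (cone_over (spherical_cap k \<epsilon>))"
    unfolding cone_over_spherical_cap by (intro open_Collect_less continuous_intros)
qed

lemma polar_eq: "norm x = 1 \<Longrightarrow> polar k x = (1 - x $ k) / 2"
  by (simp add: polar_def)

lemma polar_cone_over_spherical_cap:
  assumes "y \<in> cone_over (spherical_cap k \<epsilon>)"
  shows "y \<noteq> 0" "0 \<le> polar k y" "polar k y < cap_edge \<epsilon>"
proof -
  from assms show y: "y \<noteq> 0" unfolding cone_over_def by simp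
  define q where "q = y $ k / norm y"
  from assms have "cos ((1 - \<epsilon>) * pi) < q"
    unfolding cone_over_spherical_cap q_def using y by (simp add: pos_less_divide_eq)
  moreover have "q \<le> 1"
    using component_le_norm_cart[of y k] y by (simp add: q_def divide_le_eq)
  moreover have "polar k y = (1 - q) / 2" by (simp add: polar_def q_def)
  ultimately show "0 \<le> polar k y" "polar k y < cap_edge \<epsilon>" by (simp_all add: cap_edge_def)
qed

lemma closure_spherical_cap_subset:
  fixes k :: "'n::finite"
  shows "closure (spherical_cap k \<epsilon>) \<subseteq> {x. norm x = 1 \<and> cos ((1 - \<epsilon>) * pi) \<le> x $ k}"
proof (rule closure_minimal)
  show "closed {x :: real^'n. norm x = 1 \<and> cos ((1 - \<epsilon>) * pi) \<le> x $ k}"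
    by (intro closed_Collect_conj closed_Collect_eq closed_Collect_le continuous_intros)
qed (auto simp: spherical_cap_eq)

lemma pole_in_spherical_cap:
  assumes "0 < \<epsilon>" "\<epsilon> < 1"
  shows "axis k 1 \<in> spherical_cap k \<epsilon>"
  using cap_edge_bounds[OF assms] by (simp add: spherical_cap_eq cap_edge_def)

lemma hom0_ext_cap_zonal:
  assumes "y \<in> cone_over (spherical_cap k \<epsilon>)"
  shows "hom0_ext (cap_zonal k \<epsilon> \<Phi>) y = \<Phi> (polar k y)"
proof -
  have "y /\<^sub>R norm y \<in> spherical_cap k \<epsilon>" using assms by (simp add: cone_over_def)
  moreover have "(y /\<^sub>R norm y) $ k = y $ k / norm y" by (simp add: divide_inverse_commute)
  ultimately show ?thesis unfolding hom0_ext_def cap_zonal_def polar_def by simp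
qed

context
  fixes k :: "'n::finite" and \<epsilon> :: real and \<Phi> \<Phi>' \<Phi>'' :: "real \<Rightarrow> real"
  assumes \<epsilon>: "0 < \<epsilon>" "\<epsilon> < 1"
    and d1: "\<And>t. t \<in> {-1<..<1} \<Longrightarrow> (\<Phi> has_real_derivative \<Phi>' t) (at t)"
    and d2: "\<And>t. t \<in> {-1<..<1} \<Longrightarrow> (\<Phi>' has_real_derivative \<Phi>'' t) (at t)"
    and cont: "continuous_on {-1<..<1} \<Phi>''"
begin

interpretation sphere_domain "spherical_cap k \<epsilon>" by (rule sphere_domain_spherical_cap)

lemma has_second_derivatives_on_cap_zonal:
  "has_second_derivatives_on (cone_over (spherical_cap k \<epsilon>)) (hom0_ext (cap_zonal k \<epsilon> \<Phi>))
     (\<lambda>y b. \<Phi>' (polar k y) * polar_deriv k y b)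
     (\<lambda>y b c. \<Phi>'' (polar k y) * polar_deriv k y c * polar_deriv k y b + \<Phi>' (polar k y) * polar_deriv2 k y b c)"
    (is ?second)
  and C2_on_cap_zonal: "C2_on (cone_over (spherical_cap k \<epsilon>)) (hom0_ext (cap_zonal k \<epsilon> \<Phi>))"
proof -
  have cone: "y \<noteq> 0 \<and> polar k y \<in> {-1<..<1}" if "y \<in> cone_over (spherical_cap k \<epsilon>)" for y
    using polar_cone_over_spherical_cap[OF that] cap_edge_bounds[OF \<epsilon>] by auto
  show d: ?second
    by (rule has_second_derivatives_on_cong[OF open_cone _ has_second_derivatives_on_zonal[OF cone d1 d2]])
       (simp add: hom0_ext_cap_zonal)
  show "C2_on (cone_over (spherical_cap k \<epsilon>)) (hom0_ext (cap_zonal k \<epsilon> \<Phi>))"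
    by (rule C2_on_if_second_derivatives[OF d continuous_on_zonal_second_derivative[OF cone d1 d2 cont]])
qed

lemma sphere_laplacian_cap_zonal:
  assumes x: "x \<in> spherical_cap k \<epsilon>"
  shows "sphere_laplacian (cap_zonal k \<epsilon> \<Phi>) x
    = polar k x * (1 - polar k x) * \<Phi>'' (polar k x) + (real CARD('n) - 1) / 2 * (1 - 2 * polar k x) * \<Phi>' (polar k x)"
proof -
  have "norm x = 1" using x subset_sphere by auto
  then show ?thesis
    unfolding sphere_laplacian_def
      eucl_laplacian_eq_sum_second_derivatives[OF open_cone in_cone_over[OF x] has_second_derivatives_on_cap_zonal]
    by (simp add: sum.distrib sum_distrib_left[symmetric] sum_polar_deriv_sq sum_polar_deriv2 algebra_simps)
qed

lemma continuous_on_cap_zonal: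
  assumes edge: "\<Phi> (cap_edge \<epsilon>) = 0"
  shows "continuous_on (closure (spherical_cap k \<epsilon>)) (cap_zonal k \<epsilon> \<Phi>)"
proof -
  have range: "(1 - x $ k) / 2 \<in> {0..cap_edge \<epsilon>}" if "x \<in> closure (spherical_cap k \<epsilon>)" for x
  proof -
    have "norm x = 1" "cos ((1 - \<epsilon>) * pi) \<le> x $ k"
      using closure_spherical_cap_subset that by auto
    then show ?thesis using component_le_norm_cart[of x k] by (simp add: cap_edge_def)
  qed
  have "continuous_on {0..cap_edge \<epsilon>} \<Phi>"
    using cap_edge_bounds[OF \<epsilon>] by (intro continuous_at_imp_continuous_on ballI DERIV_isCont[OF d1]) auto
  moreover have "continuous_on (closure (spherical_cap k \<epsilon>)) (\<lambda>x. (1 - x $ k) / 2)"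
    by (intro continuous_intros) simp
  ultimately have "continuous_on (closure (spherical_cap k \<epsilon>)) (\<lambda>x. \<Phi> ((1 - x $ k) / 2))"
    by (rule continuous_on_compose2) (use range in blast)
  moreover have "\<Phi> ((1 - x $ k) / 2) = cap_zonal k \<epsilon> \<Phi> x" if "x \<in> closure (spherical_cap k \<epsilon>)" for x
  proof (cases "x \<in> spherical_cap k \<epsilon>")
    case False
    have "norm x = 1" "cos ((1 - \<epsilon>) * pi) \<le> x $ k"
      using closure_spherical_cap_subset that by auto
    with False have "x $ k = cos ((1 - \<epsilon>) * pi)" by (simp add: spherical_cap_eq)
    then show ?thesis using False edge by (simp add: cap_zonal_def cap_edge_def)
  qed (simp add: cap_zonal_def)
  ultimately show ?thesis by (rule continuous_on_eq)
qed

lemma dirichlet_sol_cap_zonal: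
  assumes edge: "\<Phi> (cap_edge \<epsilon>) = 0"
    and ode: "\<And>t. 0 \<le> t \<Longrightarrow> t < cap_edge \<epsilon> \<Longrightarrow>
                 - (t * (1 - t) * \<Phi>'' t + (real CARD('n) - 1) / 2 * (1 - 2 * t) * \<Phi>' t) = F (\<Phi> t)"
  shows "dirichlet_sol (spherical_cap k \<epsilon>) F (cap_zonal k \<epsilon> \<Phi>)"
proof -
  have "- sphere_laplacian (cap_zonal k \<epsilon> \<Phi>) x = F (cap_zonal k \<epsilon> \<Phi> x)" if x: "x \<in> spherical_cap k \<epsilon>" for x
  proof -
    have "norm x = 1" using x subset_sphere by auto
    then have "cap_zonal k \<epsilon> \<Phi> x = \<Phi> (polar k x)"
      using x by (simp add: cap_zonal_def polar_eq)
    then show ?thesis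
      using sphere_laplacian_cap_zonal[OF x] ode polar_cone_over_spherical_cap(2,3)[OF in_cone_over[OF x]] by simp
  qed
  moreover have "\<forall>x. x \<notin> spherical_cap k \<epsilon> \<longrightarrow> cap_zonal k \<epsilon> \<Phi> x = 0"
    by (simp add: cap_zonal_def)
  ultimately show ?thesis
    using C2_on_cap_zonal continuous_on_cap_zonal[OF edge] unfolding dirichlet_sol_def by blast
qed

end

lemma tendsto_cap_edge: "filterlim cap_edge (at_left 1) (at_right 0)"
proof (rule tendsto_imp_filterlim_at_left)
  have "(cap_edge \<longlongrightarrow> cap_edge 0) (at_right 0)"
    unfolding cap_edge_def[abs_def] by (intro tendsto_intros) simp
  then show "(cap_edge \<longlongrightarrow> 1) (at_right 0)" by (simp add: cap_edge_def)
  have "\<forall>\<^sub>F \<epsilon> in at_right (0::real). 0 < \<epsilon> \<and> \<epsilon> < 1"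
    unfolding eventually_at_right_field by (intro exI[of _ 1]) auto
  then show "\<forall>\<^sub>F \<epsilon> in at_right 0. cap_edge \<epsilon> < 1"
    by eventually_elim (use cap_edge_bounds in blast)
qed

section \<open>Torsion function and principal eigenvalue of the cap\<close>

context
  fixes k :: "'n::finite" and \<epsilon> N :: real
  assumes dim: "real CARD('n) = N + 1" and N: "N \<ge> 2" and \<epsilon>: "0 < \<epsilon>" "\<epsilon> < 1"
begin

lemma dirichlet_sol_cap_torsion:
  "dirichlet_sol (spherical_cap k \<epsilon>) (\<lambda>_. 1)
     (cap_zonal k \<epsilon> (\<lambda>t. zonal_series N 0 (cap_edge \<epsilon>) - zonal_series N 0 t))"
proof (rule dirichlet_sol_cap_zonal[OF \<epsilon>,
    where \<Phi>' = "\<lambda>t. - zonal_series_deriv N 0 t" and \<Phi>'' = "\<lambda>t. - zonal_series_deriv2 N 0 t"])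
  fix t :: real assume "t \<in> {-1<..<1}"
  then have t: "\<bar>t\<bar> < 1" by auto
  show "((\<lambda>t. zonal_series N 0 (cap_edge \<epsilon>) - zonal_series N 0 t) has_real_derivative - zonal_series_deriv N 0 t) (at t)"
    using DERIV_diff[OF DERIV_const has_real_derivative_zonal_series[OF N _ _ t]] by simp
  show "((\<lambda>t. - zonal_series_deriv N 0 t) has_real_derivative - zonal_series_deriv2 N 0 t) (at t)"
    using DERIV_minus[OF has_real_derivative_zonal_series_deriv[OF N _ _ t]] by simp
next
  show "continuous_on {-1<..<1} (\<lambda>t. - zonal_series_deriv2 N 0 t)"
    using continuous_on_zonal_series_deriv2[OF N, of 0] by (intro continuous_intros) auto
next
  fix t :: real assume "0 \<le> t" "t < cap_edge \<epsilon>"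
  then have "\<bar>t\<bar> < 1" using cap_edge_bounds[OF \<epsilon>] by auto
  then show "- (t * (1 - t) * - zonal_series_deriv2 N 0 t
      + (real CARD('n) - 1) / 2 * (1 - 2 * t) * - zonal_series_deriv N 0 t) = 1"
    using zonal_series_ode[OF N, of 0 t] by (simp add: dim)
qed simp

lemma torsion_function_spherical_cap:
  "torsion_function (spherical_cap k \<epsilon>) = cap_zonal k \<epsilon> (\<lambda>t. zonal_series N 0 (cap_edge \<epsilon>) - zonal_series N 0 t)"
  by (rule sphere_domain.torsion_function_eqI[OF sphere_domain_spherical_cap dirichlet_sol_cap_torsion])

lemma cap_torsion_bounds:
  "0 \<le> torsion_function (spherical_cap k \<epsilon>) x"
  "torsion_function (spherical_cap k \<epsilon>) x \<le> zonal_series N 0 (cap_edge \<epsilon>)"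
proof -
  have "0 \<le> zonal_series N 0 t" "zonal_series N 0 t \<le> zonal_series N 0 (cap_edge \<epsilon>)"
    if "0 \<le> t" "t \<le> cap_edge \<epsilon>" for t
    using zonal_series_nonneg_mono[OF N _ _ that] cap_edge_bounds[OF \<epsilon>] by auto
  moreover have "0 \<le> (1 - x $ k) / 2" "(1 - x $ k) / 2 \<le> cap_edge \<epsilon>" if "x \<in> spherical_cap k \<epsilon>"
    using that component_le_norm_cart[of x k] by (auto simp: spherical_cap_eq cap_edge_def)
  moreover have "0 \<le> zonal_series N 0 (cap_edge \<epsilon>)"
    using zonal_series_nonneg_mono[OF N, of 0 "cap_edge \<epsilon>" "cap_edge \<epsilon>"] cap_edge_bounds[OF \<epsilon>] by auto
  ultimately show "0 \<le> torsion_function (spherical_cap k \<epsilon>) x"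
    "torsion_function (spherical_cap k \<epsilon>) x \<le> zonal_series N 0 (cap_edge \<epsilon>)"
    unfolding torsion_function_spherical_cap cap_zonal_def by force+
qed

lemma sup_norm_cap_torsion:
  "sup_norm_on (spherical_cap k \<epsilon>) (torsion_function (spherical_cap k \<epsilon>)) = zonal_series N 0 (cap_edge \<epsilon>)"
  unfolding sup_norm_on_def
proof (rule cSup_eq_maximum)
  have "torsion_function (spherical_cap k \<epsilon>) (axis k 1) = zonal_series N 0 (cap_edge \<epsilon>)"
    using pole_in_spherical_cap[OF \<epsilon>, of k] by (simp add: torsion_function_spherical_cap cap_zonal_def)
  then show "zonal_series N 0 (cap_edge \<epsilon>) \<in> (\<lambda>x. \<bar>torsion_function (spherical_cap k \<epsilon>) x\<bar>) ` spherical_cap k \<epsilon>"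
    using pole_in_spherical_cap[OF \<epsilon>, of k] cap_torsion_bounds(1)[of "axis k 1"]
    by (intro image_eqI[of _ _ "axis k 1"]) auto
qed (use cap_torsion_bounds in auto)

lemma dirichlet_eigenvalue_spherical_cap:
  assumes l: "0 \<le> l" "l \<le> 1" and root: "l * zonal_series N l (cap_edge \<epsilon>) = 1"
  shows "dirichlet_eigenvalue (spherical_cap k \<epsilon>) l"
proof -
  define \<Phi> where "\<Phi> t = 1 - l * zonal_series N l t" for t
  have "dirichlet_sol (spherical_cap k \<epsilon>) (\<lambda>s. l * s) (cap_zonal k \<epsilon> \<Phi>)"
  proof (rule dirichlet_sol_cap_zonal[OF \<epsilon>,
      where \<Phi>' = "\<lambda>t. - l * zonal_series_deriv N l t" and \<Phi>'' = "\<lambda>t. - l * zonal_series_deriv2 N l t"])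
    fix t :: real assume "t \<in> {-1<..<1}"
    then have t: "\<bar>t\<bar> < 1" by auto
    show "(\<Phi> has_real_derivative - l * zonal_series_deriv N l t) (at t)"
      unfolding \<Phi>_def[abs_def]
      using DERIV_diff[OF DERIV_const DERIV_cmult[OF has_real_derivative_zonal_series[OF N l t]]] by simp
    show "((\<lambda>t. - l * zonal_series_deriv N l t) has_real_derivative - l * zonal_series_deriv2 N l t) (at t)"
      using DERIV_cmult[OF has_real_derivative_zonal_series_deriv[OF N l t], of "- l"] by simp
  next
    show "continuous_on {-1<..<1} (\<lambda>t. - l * zonal_series_deriv2 N l t)"
      using continuous_on_zonal_series_deriv2[OF N l] by (intro continuous_intros)
    show "\<Phi> (cap_edge \<epsilon>) = 0" using root by (simp add: \<Phi>_def)
  next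
    fix t :: real assume "0 \<le> t" "t < cap_edge \<epsilon>"
    then have "\<bar>t\<bar> < 1" using cap_edge_bounds[OF \<epsilon>] by auto
    have "- (t * (1 - t) * (- l * zonal_series_deriv2 N l t)
          + (real CARD('n) - 1) / 2 * (1 - 2 * t) * (- l * zonal_series_deriv N l t))
        = l * (t * (1 - t) * zonal_series_deriv2 N l t + N / 2 * (1 - 2 * t) * zonal_series_deriv N l t)"
      by (simp add: dim algebra_simps)
    also have "\<dots> = l * \<Phi> t" using zonal_series_ode[OF N l \<open>\<bar>t\<bar> < 1\<close>] by (simp add: \<Phi>_def)
    finally show "- (t * (1 - t) * (- l * zonal_series_deriv2 N l t)
          + (real CARD('n) - 1) / 2 * (1 - 2 * t) * (- l * zonal_series_deriv N l t)) = l * \<Phi> t" .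
  qed
  moreover have "cap_zonal k \<epsilon> \<Phi> (axis k 1) = 1"
    using pole_in_spherical_cap[OF \<epsilon>, of k] by (simp add: cap_zonal_def \<Phi>_def)
  ultimately show ?thesis
    unfolding dirichlet_eigenvalue_def using pole_in_spherical_cap[OF \<epsilon>, of k]
    by (intro exI[of _ "cap_zonal k \<epsilon> \<Phi>"] conjI bexI[of _ "axis k 1"]) auto
qed

lemma principal_eigenvalue_spherical_cap_bounds:
  assumes E: "4 \<le> zonal_series N 0 (cap_edge \<epsilon>)"
  shows "zonal_series N 0 (cap_edge \<epsilon>) - 2 \<le> 1 / principal_eigenvalue (spherical_cap k \<epsilon>)"
    and "1 / principal_eigenvalue (spherical_cap k \<epsilon>) \<le> zonal_series N 0 (cap_edge \<epsilon>)"
proof -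
  define S where "S = {\<mu>. dirichlet_eigenvalue (spherical_cap k \<epsilon>) \<mu>}"
  obtain l where l: "0 < l" "l \<le> 1 / (zonal_series N 0 (cap_edge \<epsilon>) - 2)" "l * zonal_series N l (cap_edge \<epsilon>) = 1"
    using zonal_series_root_exists[OF N _ _ E] cap_edge_bounds[OF \<epsilon>] by auto
  have "1 / (zonal_series N 0 (cap_edge \<epsilon>) - 2) \<le> 1" using E by simp
  then have "l \<in> S" using dirichlet_eigenvalue_spherical_cap[of l] l by (simp add: S_def)
  have lower: "1 / zonal_series N 0 (cap_edge \<epsilon>) \<le> \<mu>" if "\<mu> \<in> S" for \<mu>
  proof -
    have "1 \<le> \<mu> * zonal_series N 0 (cap_edge \<epsilon>)"
      using sphere_domain.dirichlet_eigenvalue_ge[OF sphere_domain_spherical_cap _ dirichlet_sol_cap_torsion]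
        that cap_torsion_bounds(2) unfolding S_def torsion_function_spherical_cap by blast
    then show ?thesis using E by (simp add: divide_le_eq mult.commute)
  qed
  have ge: "1 / zonal_series N 0 (cap_edge \<epsilon>) \<le> Inf S" using \<open>l \<in> S\<close> lower by (intro cInf_greatest) auto
  have le: "Inf S \<le> 1 / (zonal_series N 0 (cap_edge \<epsilon>) - 2)"
    using \<open>l \<in> S\<close> lower l(2) by (intro order.trans[OF cInf_lower]) (auto simp: bdd_below_def)
  have pos: "0 < Inf S" using ge E by (smt (verit) divide_pos_pos)
  show "zonal_series N 0 (cap_edge \<epsilon>) - 2 \<le> 1 / principal_eigenvalue (spherical_cap k \<epsilon>)"
    using le pos E unfolding principal_eigenvalue_def S_def[symmetric] by (simp add: le_divide_eq mult.commute)
  show "1 / principal_eigenvalue (spherical_cap k \<epsilon>) \<le> zonal_series N 0 (cap_edge \<epsilon>)"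
    using ge pos E unfolding principal_eigenvalue_def S_def[symmetric] by (simp add: divide_le_eq mult.commute)
qed

end

theorem proposition1p2:
  fixes k :: "'n::finite"
  assumes "CARD('n) \<ge> 3"
  shows "\<exists>C \<epsilon>0. \<epsilon>0 > 0 \<and>
           (\<forall>\<epsilon>. 0 < \<epsilon> \<and> \<epsilon> < \<epsilon>0 \<longrightarrow>
              \<bar>sup_norm_on (spherical_cap k \<epsilon>) (torsion_function (spherical_cap k \<epsilon>))
                 - 1 / principal_eigenvalue (spherical_cap k \<epsilon>)\<bar> \<le> C)"
proof -
  define N where "N = real CARD('n) - 1"
  have dim: "real CARD('n) = N + 1" and N: "N \<ge> 2" using assms by (auto simp: N_def)
  have "\<forall>\<^sub>F \<epsilon> in at_right 0. 4 \<le> zonal_series N 0 (cap_edge \<epsilon>)"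
    using filterlim_compose[OF filterlim_zonal_series_at_top[OF N] tendsto_cap_edge] by (simp add: filterlim_at_top)
  moreover have "\<forall>\<^sub>F \<epsilon> in at_right (0::real). 0 < \<epsilon> \<and> \<epsilon> < 1"
    unfolding eventually_at_right_field by (intro exI[of _ 1]) auto
  ultimately have "\<forall>\<^sub>F \<epsilon> in at_right 0.
      \<bar>sup_norm_on (spherical_cap k \<epsilon>) (torsion_function (spherical_cap k \<epsilon>))
         - 1 / principal_eigenvalue (spherical_cap k \<epsilon>)\<bar> \<le> 2"
  proof eventually_elim
    case (elim \<epsilon>)
    then have \<epsilon>: "0 < \<epsilon>" "\<epsilon> < 1" by auto
    show ?case
      using sup_norm_cap_torsion[OF dim N \<epsilon>, of k] principal_eigenvalue_spherical_cap_bounds[OF dim N \<epsilon> elim(1), of k]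
      by (simp add: abs_le_iff)
  qed
  then show ?thesis unfolding eventually_at_right_field by auto
qed

end
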